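(* Let $G$ be a connected $m$-uniform hypergraph and let $H$ be a connected spanning sub-hypergraph of $G$ (same vertex set, edge set a subset of that of $G$). Then $s(G)\mid s(H)$ and $\gamma(G)\le\gamma(H)$.
   Context: For an $m$-uniform hypergraph $G$ on vertices $v_1,\dots,v_n$, the adjacency tensor $\mathcal{A}(G)$ is the order-$m$, dimension-$n$ tensor with $a_{i_1\cdots i_m}=\frac1{(m-1)!}$ if $\{v_{i_1},\dots,v_{i_m}\}$ is an edge and $0$ otherwise. For a tensor $\mathcal{A}$: eigenvectors $\mathcal{A}x^{m-1}=\lambda x^{[m-1]}$, $x\ne0$, $(\mathcal{A}x^{m-1})_i=\sum a_{ii_2\cdots i_m}x_{i_2}\cdots x_{i_m}$; $\rho(\mathcal{A})$ spectral radius. Stabilizing index $s(\mathcal{A})$: number of invertible diagonal $D$ with $d_{11}=1$ and $\mathcal{A}=D^{-(m-1)}\mathcal{A}D$, $(D^{-(m-1)}\mathcal{A}D)_{i_1\cdots i_m}=d_{i_1}^{-(m-1)}a_{i_1\cdots i_m}d_{i_2}\cdots d_{i_m}$. Stabilizing dimension $\gamma(\mathcal{A})$: composition length of the $\mathbb{Z}_m$-module of eigenvectors $y$ for $\rho(\mathcal{A})$ normalized by $y_1=1$ (no zero entries for connected hypergraphs), with operation $y\circ\hat y=D_yD_{\hat y}v_p$, $D_y=\mathrm{diag}(y_i/|y_i|)$, $v_p$ the positive one. $s(G)=s(\mathcal{A}(G))$, $\gamma(G)=\gamma(\mathcal{A}(G))$. *)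

theory Defs
  imports Complex_Main "HOL-Algebra.Algebra"
begin

text \<open>Vertices v_1,...,v_n are represented by 0,...,n-1 (so v_1 is 0).
  A hypergraph is given by n and its edge set E (a set of vertex sets).\<close>

definition uniform_hypergraph :: "nat \<Rightarrow> nat \<Rightarrow> nat set set \<Rightarrow> bool" where
  "uniform_hypergraph m n E \<longleftrightarrow> (\<forall>e\<in>E. e \<subseteq> {..<n} \<and> card e = m)"

definition hg_connected :: "nat \<Rightarrow> nat set set \<Rightarrow> bool" where
  "hg_connected n E \<longleftrightarrow>
     (\<forall>u<n. \<forall>v<n. (u, v) \<in> ({(x, y). \<exists>e\<in>E. x \<in> e \<and> y \<in> e})\<^sup>*)"

text \<open>A tensor is a function on index lists; only lists of length m with
  entries < n are meaningful. Vectors are functions nat => complex that vanish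
  outside {0..<n}.\<close>

type_synonym tensor = "nat list \<Rightarrow> complex"
type_synonym cvec = "nat \<Rightarrow> complex"

definition tensor_indices :: "nat \<Rightarrow> nat \<Rightarrow> nat list set" where
  "tensor_indices k n = {is. length is = k \<and> set is \<subseteq> {..<n}}"

definition is_vec :: "nat \<Rightarrow> cvec \<Rightarrow> bool" where
  "is_vec n x \<longleftrightarrow> (\<forall>i\<ge>n. x i = 0)"

definition adj_tensor :: "nat \<Rightarrow> nat set set \<Rightarrow> tensor" where
  "adj_tensor m E = (\<lambda>is. if length is = m \<and> set is \<in> E
                           then 1 / of_nat (fact (m - 1)) else 0)"

definition tensor_apply :: "nat \<Rightarrow> nat \<Rightarrow> tensor \<Rightarrow> cvec \<Rightarrow> nat \<Rightarrow> complex" where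
  "tensor_apply m n A x i =
     (\<Sum>js\<in>tensor_indices (m - 1) n. A (i # js) * prod_list (map x js))"

definition tensor_eigenpair :: "nat \<Rightarrow> nat \<Rightarrow> tensor \<Rightarrow> complex \<Rightarrow> cvec \<Rightarrow> bool" where
  "tensor_eigenpair m n A lam x \<longleftrightarrow> is_vec n x \<and> (\<exists>i<n. x i \<noteq> 0) \<and>
     (\<forall>i<n. tensor_apply m n A x i = lam * x i ^ (m - 1))"

definition spectral_radius :: "nat \<Rightarrow> nat \<Rightarrow> tensor \<Rightarrow> real" where
  "spectral_radius m n A = Sup {cmod lam | lam. \<exists>x. tensor_eigenpair m n A lam x}"

text \<open>An invertible diagonal matrix D = diag(d_1..d_n) is represented by d with
  d i \<noteq> 0 for i < n, padded by d i = 1 for i \<ge> n (so distinct matrices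
  correspond to distinct functions).\<close>

definition diag_stabilizes :: "nat \<Rightarrow> nat \<Rightarrow> tensor \<Rightarrow> cvec \<Rightarrow> bool" where
  "diag_stabilizes m n A d \<longleftrightarrow>
     (\<forall>is\<in>tensor_indices m n.
        inverse (d (hd is) ^ (m - 1)) * A is * prod_list (map d (tl is)) = A is)"

definition stabilizing_index :: "nat \<Rightarrow> nat \<Rightarrow> tensor \<Rightarrow> nat" where
  "stabilizing_index m n A =
     card {d. (\<forall>i<n. d i \<noteq> 0) \<and> (\<forall>i\<ge>n. d i = 1) \<and> d 0 = 1 \<and> diag_stabilizes m n A d}"

definition rho_eigvecs :: "nat \<Rightarrow> nat \<Rightarrow> tensor \<Rightarrow> cvec set" where
  "rho_eigvecs m n A =
     {y. tensor_eigenpair m n A (complex_of_real (spectral_radius m n A)) y \<and> y 0 = 1}"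

definition positive_eigvec :: "nat \<Rightarrow> nat \<Rightarrow> tensor \<Rightarrow> cvec" where
  "positive_eigvec m n A =
     (THE v. v \<in> rho_eigvecs m n A \<and> (\<forall>i<n. Im (v i) = 0 \<and> Re (v i) > 0))"

text \<open>y o y' = D_y D_y' v_p with D_y = diag(y_i/|y_i|); note sgn z = z / |z|.\<close>
definition eigvec_module :: "nat \<Rightarrow> nat \<Rightarrow> tensor \<Rightarrow> cvec monoid" where
  "eigvec_module m n A =
     \<lparr>carrier = rho_eigvecs m n A,
      monoid.mult = (\<lambda>y y' i. sgn (y i) * sgn (y' i) * positive_eigvec m n A i),
      one = positive_eigvec m n A\<rparr>"

definition composition_series :: "('a, 'b) monoid_scheme \<Rightarrow> 'a set list \<Rightarrow> bool" where
  "composition_series G Hs \<longleftrightarrow> Hs \<noteq> [] \<and> hd Hs = {\<one>\<^bsub>G\<^esub>} \<and> last Hs = carrier G \<and>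
     (\<forall>H\<in>set Hs. subgroup H G) \<and>
     (\<forall>i. Suc i < length Hs \<longrightarrow>
        normal (Hs ! i) (G\<lparr>carrier := Hs ! Suc i\<rparr>) \<and>
        simple_group ((G\<lparr>carrier := Hs ! Suc i\<rparr>) Mod (Hs ! i)))"

definition composition_length :: "('a, 'b) monoid_scheme \<Rightarrow> nat" where
  "composition_length G = (LEAST k. \<exists>Hs. composition_series G Hs \<and> length Hs = Suc k)"

definition stabilizing_dimension :: "nat \<Rightarrow> nat \<Rightarrow> tensor \<Rightarrow> nat" where
  "stabilizing_dimension m n A = composition_length (eigvec_module m n A)"

definition hg_stab_index :: "nat \<Rightarrow> nat \<Rightarrow> nat set set \<Rightarrow> nat" where
  "hg_stab_index m n E = stabilizing_index m n (adj_tensor m E)"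

definition hg_stab_dim :: "nat \<Rightarrow> nat \<Rightarrow> nat set set \<Rightarrow> nat" where
  "hg_stab_dim m n E = stabilizing_dimension m n (adj_tensor m E)"

end

theory Submission
  imports Defs "HOL-Analysis.Analysis" "HOL-Combinatorics.Multiset_Permutations"
begin

text \<open>The diagonal matrices \<open>diag d\<close> fixing the adjacency tensor are exactly the vectors
  \<open>d\<close> with \<open>(\<Prod>j\<in>e - {i}. d j) = d i ^ (m - 1)\<close> for every edge \<open>e\<close> and \<open>i \<in> e\<close>.
  They form a finite abelian group, and deleting edges only deletes constraints, so the group
  of \<open>G\<close> is a subgroup of that of \<open>H\<close>; Lagrange gives \<open>s(G) | s(H)\<close>.

  A positive eigenvector \<open>v\<close>, obtained by maximising the Lagrangian
  \<open>\<Sum>e. \<Prod>i\<in>e. x i\<close> on the nonnegative unit \<open>m\<close>-sphere, dominates every eigenvector in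
  modulus. The equality cases show that \<open>\<rho>\<close> is its eigenvalue and that the normalised
  eigenvectors of \<open>\<rho>\<close> are exactly the vectors \<open>diag d \<cdot> v\<close>, the module operation becoming
  multiplication of the \<open>d\<close>. Hence \<open>\<gamma>\<close> is the composition length of a finite abelian group,
  i.e. the number of prime factors of its order counted with multiplicity, which is monotone
  under divisibility.\<close>

section \<open>Composition length of finite abelian groups\<close>

definition bigomega :: "nat \<Rightarrow> nat" where
  "bigomega k = size (prime_factorization k)"

lemma bigomega_prime_mult:
  assumes "Factorial_Ring.prime p" and "c > 0"
  shows "bigomega (p * c) = Suc (bigomega c)"
  using assms by (simp add: bigomega_def prime_factorization_mult prime_factorization_prime)

lemma bigomega_dvd_mono:
  assumes "a dvd b" and "b \<noteq> 0"
  shows "bigomega a \<le> bigomega b"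
proof -
  have "prime_factorization a \<subseteq># prime_factorization b"
    using assms prime_factorization_subset_iff_dvd[of a b] by (cases "a = 0") auto
  then show ?thesis unfolding bigomega_def by (rule size_mset_mono)
qed

lemma (in comm_group) simple_imp_prime_card:
  assumes "simple_group G"
  shows "Factorial_Ring.prime (card (carrier G))"
proof -
  interpret simple_group G by fact
  have cyclic: "ord g = card (carrier G)" if g: "g \<in> carrier G" "g \<noteq> \<one>" for g
  proof -
    have "generate G {g} \<lhd> G" using g by (intro subgroup_imp_normal generate_is_subgroup) auto
    moreover have "g \<in> generate G {g}" by (rule generate.incl) simp
    ultimately have "generate G {g} = carrier G" using g no_real_normal_subgroup by blast
    then show ?thesis using generate_pow_card[OF g(1)] by simp
  qed
  obtain g where g: "g \<in> carrier G" "g \<noteq> \<one>" using simple_not_triv one_closed by blast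
  have N1: "card (carrier G) > 1" using order_gt_one unfolding Coset.order_def .
  show ?thesis
  proof (rule ccontr)
    assume np: "\<not> Factorial_Ring.prime (card (carrier G))"
    obtain p where p: "Factorial_Ring.prime p" "p dvd card (carrier G)"
      using prime_factor_nat[of "card (carrier G)"] N1 by auto
    then obtain k where k: "card (carrier G) = p * k" by blast
    have "p \<noteq> card (carrier G)" using np p by auto
    then have k1: "k > 1" using k N1 by (cases "k \<le> 1") (auto simp: le_Suc_eq)
    have "ord (g [^] p) = card (carrier G) div p"
      using ord_pow[OF g(1), of p] cyclic[OF g] p prime_gt_0_nat[OF p(1)] by simp
    also have "\<dots> = k" using k prime_gt_0_nat[OF p(1)] by simp
    finally have ord_k: "ord (g [^] p) = k" .
    then have "g [^] p \<noteq> \<one>" using k1 ord_eq_1[of "g [^] p"] g by auto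
    then have "ord (g [^] p) = card (carrier G)" using cyclic g by simp
    then have "k = p * k" using k ord_k by simp
    then have "p = 1" using k1 by simp
    then show False using p(1) by simp
  qed
qed

lemma (in comm_group) subgroup_comm_group:
  assumes "subgroup H G" shows "comm_group (G\<lparr>carrier := H\<rparr>)"
proof (rule group.group_comm_groupI)
  show "group (G\<lparr>carrier := H\<rparr>)" by (rule subgroup.subgroup_is_group[OF assms is_group])
qed (use subgroup.subset[OF assms] m_comm in auto)

lemma (in comm_group) order_simple_FactGroup:
  assumes "subgroup H G" and "simple_group (G Mod H)"
  obtains p where "Factorial_Ring.prime p" and "card (carrier G) = p * card H"
proof -
  have "Factorial_Ring.prime (card (carrier (G Mod H)))"
    using comm_group.simple_imp_prime_card[OF abelian_FactGroup[OF assms(1)] assms(2)] .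
  moreover have "card (carrier (G Mod H)) * card H = card (carrier G)"
    using lagrange[OF assms(1)] unfolding FactGroup_def Coset.order_def by simp
  ultimately show ?thesis using that by metis
qed

lemma (in comm_group) composition_series_length:
  assumes "composition_series G Hs"
  shows "length Hs = Suc (bigomega (card (carrier G)))"
proof -
  have cs: "Hs \<noteq> []" "hd Hs = {\<one>}" "last Hs = carrier G" "\<forall>H\<in>set Hs. subgroup H G"
    "\<And>i. Suc i < length Hs \<Longrightarrow> Hs ! i \<lhd> G\<lparr>carrier := Hs ! Suc i\<rparr> \<and>
        simple_group (G\<lparr>carrier := Hs ! Suc i\<rparr> Mod Hs ! i)"
    using assms unfolding composition_series_def by auto
  have "bigomega (card (Hs ! i)) = i \<and> card (Hs ! i) > 0" if "i < length Hs" for i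
    using that
  proof (induction i)
    case 0
    have "Hs ! 0 = {\<one>}" using cs(1,2) by (simp add: hd_conv_nth)
    then show ?case by (simp add: bigomega_def)
  next
    case (Suc i)
    let ?K = "G\<lparr>carrier := Hs ! Suc i\<rparr>"
    have "subgroup (Hs ! Suc i) G" using cs(4) Suc.prems by simp
    then have K: "comm_group ?K" by (rule subgroup_comm_group)
    have "subgroup (Hs ! i) ?K" using cs(5)[OF Suc.prems] by (simp add: normal_imp_subgroup)
    moreover have "simple_group (?K Mod Hs ! i)" using cs(5)[OF Suc.prems] by blast
    ultimately obtain p where p: "Factorial_Ring.prime p" "card (carrier ?K) = p * card (Hs ! i)"
      by (rule comm_group.order_simple_FactGroup[OF K])
    have "i < length Hs" using Suc.prems by simp
    then have IH: "bigomega (card (Hs ! i)) = i" "card (Hs ! i) > 0" using Suc.IH by simp_all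
    have card: "card (Hs ! Suc i) = p * card (Hs ! i)" using p(2) by simp
    then have "bigomega (card (Hs ! Suc i)) = Suc i"
      using bigomega_prime_mult[OF p(1) IH(2)] IH(1) by (simp only:)
    moreover have "card (Hs ! Suc i) > 0" using card IH(2) prime_gt_0_nat[OF p(1)] by simp
    ultimately show ?case ..
  qed
  moreover obtain l where l: "length Hs = Suc l" using cs(1) by (cases Hs) auto
  moreover have "Hs ! l = carrier G" using cs(1,3) l by (simp add: last_conv_nth)
  ultimately show ?thesis by (metis lessI)
qed

lemma (in normal) simple_FactGroup_of_maximal:
  assumes "finite (carrier G)" and "H \<noteq> carrier G"
    and maximal: "\<And>U. subgroup U G \<Longrightarrow> H \<subset> U \<Longrightarrow> U = carrier G"
  shows "simple_group (G Mod H)"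
proof (intro simple_group.intro simple_group_axioms.intro factorgroup_is_group)
  have lag: "card (carrier (G Mod H)) * card H = card (carrier G)"
    using lagrange[OF is_subgroup] unfolding FactGroup_def Coset.order_def by simp
  have "card H < card (carrier G)"
    using assms(1,2) subset by (simp add: psubset_card_mono psubset_eq)
  show "1 < Coset.order (G Mod H)"
  proof (rule ccontr)
    assume "\<not> 1 < Coset.order (G Mod H)"
    then have "card (carrier (G Mod H)) * card H \<le> 1 * card H"
      unfolding Coset.order_def by (intro mult_le_mono1) simp
    with lag \<open>card H < card (carrier G)\<close> show False by simp
  qed
next
  fix NN assume "NN \<lhd> G Mod H"
  then have sub: "subgroup NN (G Mod H)" by (rule normal_imp_subgroup)
  have union: "\<Union>NN = {x \<in> carrier G. H #> x \<in> NN}" by (rule factgroup_subgroup_union_char[OF sub])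
  have cosets: "\<exists>x\<in>carrier G. C = H #> x" if "C \<in> carrier (G Mod H)" for C
    using that by (auto simp: carrier_FactGroup)
  have "H \<in> NN" using subgroup.one_closed[OF sub] by simp
  then have "H \<subseteq> \<Union>NN" by blast
  then consider "\<Union>NN = H" | "\<Union>NN = carrier G"
    using maximal[OF factgroup_subgroup_union_subgroup[OF sub]] psubsetI by metis
  then show "NN = carrier (G Mod H) \<or> NN = {\<one>\<^bsub>G Mod H\<^esub>}"
  proof cases
    case 1
    have "C = H" if "C \<in> NN" for C
    proof -
      have "C \<in> carrier (G Mod H)" using that subgroup.subset[OF sub] by blast
      then obtain x where x: "x \<in> carrier G" "C = H #> x" using cosets by blast
      have "x \<in> C" using x rcos_self[OF x(1) is_subgroup] by simp
      then have "x \<in> \<Union>NN" using that by blast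
      then have "x \<in> H" unfolding 1 .
      then show ?thesis using x coset_join2[OF x(1) is_subgroup] by simp
    qed
    then have "NN = {H}" using \<open>H \<in> NN\<close> by blast
    then show ?thesis by simp
  next
    case 2
    have "C \<in> NN" if C: "C \<in> carrier (G Mod H)" for C
    proof -
      obtain x where x: "x \<in> carrier G" "C = H #> x" using cosets[OF C] by blast
      then have "x \<in> \<Union>NN" unfolding 2 by blast
      then show ?thesis using union x(2) by simp
    qed
    then have "NN = carrier (G Mod H)" using subgroup.subset[OF sub] by blast
    then show ?thesis by simp
  qed
qed

lemma (in group) exists_minimal_supergroup:
  assumes "finite (carrier G)" and "subgroup H G" and "H \<noteq> carrier G"
  obtains M where "subgroup M G" "H \<subset> M"
    "\<And>U. subgroup U G \<Longrightarrow> H \<subset> U \<Longrightarrow> U \<subseteq> M \<Longrightarrow> U = M"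
proof -
  define SS where "SS = {M. subgroup M G \<and> H \<subset> M}"
  have "carrier G \<in> SS"
    using assms(2,3) subgroup_self subgroup.subset[OF assms(2)] unfolding SS_def by auto
  moreover have "SS \<subseteq> Pow (carrier G)" using subgroup.subset unfolding SS_def by auto
  then have "finite SS" using assms(1) finite_subset by blast
  ultimately obtain M where M: "M \<in> SS" and min: "\<forall>U\<in>SS. U \<subseteq> M \<longrightarrow> M = U"
    using finite_has_minimal[of SS] by blast
  show ?thesis
  proof (rule that)
    show "subgroup M G" "H \<subset> M" using M unfolding SS_def by auto
    fix U assume "subgroup U G" "H \<subset> U" "U \<subseteq> M"
    then show "U = M" using min unfolding SS_def by auto
  qed
qed

definition simple_factor_chain :: "('a, 'b) monoid_scheme \<Rightarrow> 'a set list \<Rightarrow> bool" where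
  "simple_factor_chain G Hs \<longleftrightarrow> Hs \<noteq> [] \<and> last Hs = carrier G \<and> (\<forall>H\<in>set Hs. subgroup H G) \<and>
     (\<forall>i. Suc i < length Hs \<longrightarrow>
        Hs ! i \<lhd> G\<lparr>carrier := Hs ! Suc i\<rparr> \<and> simple_group (G\<lparr>carrier := Hs ! Suc i\<rparr> Mod Hs ! i))"

lemma simple_factor_chain_Cons:
  assumes "simple_factor_chain G Hs" and "subgroup H G"
    and "H \<lhd> G\<lparr>carrier := hd Hs\<rparr>" and "simple_group (G\<lparr>carrier := hd Hs\<rparr> Mod H)"
  shows "simple_factor_chain G (H # Hs)"
proof -
  have ne: "Hs \<noteq> []" using assms(1) unfolding simple_factor_chain_def by simp
  show ?thesis unfolding simple_factor_chain_def
  proof (intro conjI allI impI)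
    show "last (H # Hs) = carrier G" using assms(1) ne unfolding simple_factor_chain_def by simp
    show "\<forall>H'\<in>set (H # Hs). subgroup H' G" using assms(1,2) unfolding simple_factor_chain_def by simp
  next
    fix i assume "Suc i < length (H # Hs)"
    then show "(H # Hs) ! i \<lhd> G\<lparr>carrier := (H # Hs) ! Suc i\<rparr>"
      using assms(1,3) ne unfolding simple_factor_chain_def by (cases i) (auto simp: hd_conv_nth)
  next
    fix i assume "Suc i < length (H # Hs)"
    then show "simple_group (G\<lparr>carrier := (H # Hs) ! Suc i\<rparr> Mod (H # Hs) ! i)"
      using assms(1,4) ne unfolding simple_factor_chain_def by (cases i) (auto simp: hd_conv_nth)
  qed simp
qed

lemma (in comm_group) simple_factor_chain_exists:
  assumes "finite (carrier G)" and "subgroup H G"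
  shows "\<exists>Hs. simple_factor_chain G Hs \<and> hd Hs = H"
  using assms(2)
proof (induction "card (carrier G) - card H" arbitrary: H rule: less_induct)
  case less
  show ?case
  proof (cases "H = carrier G")
    case True
    then have "simple_factor_chain G [H]" using less.prems by (simp add: simple_factor_chain_def)
    then show ?thesis by force
  next
    case False
    obtain M where M: "subgroup M G" "H \<subset> M"
      and minimal: "\<And>U. subgroup U G \<Longrightarrow> H \<subset> U \<Longrightarrow> U \<subseteq> M \<Longrightarrow> U = M"
      using exists_minimal_supergroup[OF assms(1) less.prems False] by blast
    let ?K = "G\<lparr>carrier := M\<rparr>"
    interpret K: comm_group ?K by (rule subgroup_comm_group[OF M(1)])
    have HK: "subgroup H ?K" using subgroup_incl[OF less.prems M(1)] M(2) by blast
    interpret HK: normal H ?K using K.subgroup_imp_normal[OF HK] .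
    have "simple_group (?K Mod H)"
    proof (rule HK.simple_FactGroup_of_maximal)
      show "finite (carrier ?K)" using assms(1) subgroup.subset[OF M(1)] finite_subset by auto
      show "H \<noteq> carrier ?K" using M(2) by auto
      fix U assume "subgroup U ?K" "H \<subset> U"
      then show "U = carrier ?K"
        using minimal[OF incl_subgroup[OF M(1)]] subgroup.subset by fastforce
    qed
    moreover have "finite M" using assms(1) subgroup.subset[OF M(1)] finite_subset by blast
    then have "card H < card M" "card M \<le> card (carrier G)"
      using M(2) assms(1) subgroup.subset[OF M(1)] by (auto intro: psubset_card_mono card_mono)
    then have "card (carrier G) - card M < card (carrier G) - card H" by linarith
    then obtain Hs where "simple_factor_chain G Hs" "hd Hs = M" using less.hyps M(1) by blast
    ultimately show ?thesis
      using simple_factor_chain_Cons less.prems K.subgroup_imp_normal[OF HK] by fastforce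
  qed
qed

theorem (in comm_group) composition_length_eq_bigomega:
  assumes "finite (carrier G)"
  shows "composition_length G = bigomega (card (carrier G))"
proof -
  obtain Hs where "simple_factor_chain G Hs" "hd Hs = {\<one>}"
    using simple_factor_chain_exists[OF assms triv_subgroup] by blast
  then have "composition_series G Hs"
    unfolding simple_factor_chain_def composition_series_def by blast
  then show ?thesis
    unfolding composition_length_def using composition_series_length
    by (intro Least_equality) fastforce+
qed

section \<open>Hypergraph eigenequations and stabilizers\<close>

lemma uniform_hypergraph_finite:
  assumes "uniform_hypergraph m n E" shows "finite E"
proof -
  have "E \<subseteq> Pow {..<n}" using assms unfolding uniform_hypergraph_def by auto
  then show ?thesis by (rule finite_subset) simp
qed

lemma uniform_hypergraph_edge:
  assumes "uniform_hypergraph m n E" "e \<in> E"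
  shows "e \<subseteq> {..<n}" "card e = m" "finite e"
  using assms unfolding uniform_hypergraph_def by (auto intro: finite_subset)

lemma uniform_hypergraph_mono:
  "uniform_hypergraph m n E \<Longrightarrow> E' \<subseteq> E \<Longrightarrow> uniform_hypergraph m n E'"
  unfolding uniform_hypergraph_def by blast

definition hg_adj_apply :: "nat set set \<Rightarrow> (nat \<Rightarrow> 'a::comm_ring_1) \<Rightarrow> nat \<Rightarrow> 'a" where
  "hg_adj_apply E x i = (\<Sum>e\<in>{e\<in>E. i \<in> e}. prod x (e - {i}))"

text \<open>Each edge through \<open>i\<close> is hit by the \<open>(m - 1)!\<close> orderings of its other vertices,
  which cancels the normalisation of the adjacency tensor.\<close>

lemma tensor_apply_adj_tensor:
  fixes x :: "nat \<Rightarrow> complex"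
  assumes U: "uniform_hypergraph m n E" and m: "m \<ge> 2" and i: "i < n"
  shows "tensor_apply m n (adj_tensor m E) x i = hg_adj_apply E x i"
proof -
  define c :: complex where "c = 1 / of_nat (fact (m - 1))"
  define TI where "TI = tensor_indices (m - 1) n"
  define P where "P = {js\<in>TI. insert i (set js) \<in> E}"
  have finTI: "finite TI"
  proof -
    have "TI \<subseteq> {xs. set xs \<subseteq> {..<n} \<and> length xs = m - 1}"
      unfolding TI_def tensor_indices_def by auto
    then show ?thesis using finite_lists_length_eq[of "{..<n}" "m - 1"] finite_subset by auto
  qed
  have "tensor_apply m n (adj_tensor m E) x i =
      (\<Sum>js\<in>TI. if insert i (set js) \<in> E then c * prod_list (map x js) else 0)"
    unfolding tensor_apply_def adj_tensor_def TI_def c_def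
    by (rule sum.cong[OF refl]) (use m in \<open>auto simp: tensor_indices_def\<close>)
  also have "\<dots> = (\<Sum>js\<in>P. c * prod_list (map x js))"
    unfolding P_def by (simp add: sum.inter_filter[OF finTI, symmetric])
  also have "P = (\<Union>e\<in>{e\<in>E. i\<in>e}. permutations_of_set (e - {i}))"
  proof (intro Set.set_eqI iffI)
    fix js assume "js \<in> P"
    then have js: "length js = m - 1" "set js \<subseteq> {..<n}" "insert i (set js) \<in> E"
      unfolding P_def TI_def tensor_indices_def by auto
    have ce: "card (insert i (set js)) = m" using uniform_hypergraph_edge(2)[OF U js(3)] .
    have "i \<notin> set js"
    proof
      assume "i \<in> set js"
      then have "card (insert i (set js)) = card (set js)" by (simp add: insert_absorb)
      with ce card_length[of js] js(1) m show False by simp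
    qed
    then have "card (set js) = length js"
      using ce js(1) m card_length[of js] by (simp add: card_insert_if)
    then have "js \<in> permutations_of_set (insert i (set js) - {i})"
      using \<open>i \<notin> set js\<close> by (simp add: permutations_of_set_def card_distinct)
    then show "js \<in> (\<Union>e\<in>{e\<in>E. i\<in>e}. permutations_of_set (e - {i}))"
      using js(3) by blast
  next
    fix js assume "js \<in> (\<Union>e\<in>{e\<in>E. i\<in>e}. permutations_of_set (e - {i}))"
    then obtain e where e: "e \<in> E" "i \<in> e" "set js = e - {i}" "distinct js"
      by (auto simp: permutations_of_set_def)
    have "length js = card (e - {i})" using e by (metis distinct_card)
    also have "\<dots> = m - 1" using uniform_hypergraph_edge[OF U e(1)] e(2) by simp
    finally show "js \<in> P"
      unfolding P_def TI_def tensor_indices_def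
      using e uniform_hypergraph_edge(1)[OF U e(1)] by (auto simp: insert_absorb)
  qed
  also have "(\<Sum>js\<in>(\<Union>e\<in>{e\<in>E. i\<in>e}. permutations_of_set (e - {i})). c * prod_list (map x js))
      = (\<Sum>e\<in>{e\<in>E. i\<in>e}. \<Sum>js\<in>permutations_of_set (e - {i}). c * prod_list (map x js))"
  proof (rule sum.UNION_disjoint)
    show "finite {e \<in> E. i \<in> e}" using uniform_hypergraph_finite[OF U] by simp
    show "\<forall>e\<in>{e \<in> E. i \<in> e}. finite (permutations_of_set (e - {i}))" by simp
  qed (auto simp: permutations_of_set_def)
  also have "\<dots> = hg_adj_apply E x i"
    unfolding hg_adj_apply_def
  proof (rule sum.cong[OF refl])
    fix e assume e: "e \<in> {e \<in> E. i \<in> e}"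
    have "(\<Sum>js\<in>permutations_of_set (e - {i}). c * prod_list (map x js))
        = (\<Sum>js\<in>permutations_of_set (e - {i}). c * prod x (e - {i}))"
      by (rule sum.cong[OF refl])
        (simp add: permutations_of_set_def prod.distinct_set_conv_list[symmetric])
    also have "\<dots> = of_nat (fact (m - 1)) * c * prod x (e - {i})"
      using e uniform_hypergraph_edge[OF U] by simp
    also have "\<dots> = prod x (e - {i})" unfolding c_def by simp
    finally show "(\<Sum>js\<in>permutations_of_set (e - {i}). c * prod_list (map x js))
        = prod x (e - {i})" .
  qed
  finally show ?thesis .
qed

definition hg_stabilizers :: "nat \<Rightarrow> nat \<Rightarrow> nat set set \<Rightarrow> (nat \<Rightarrow> complex) set" where
  "hg_stabilizers m n E = {d. (\<forall>i<n. d i \<noteq> 0) \<and> (\<forall>i\<ge>n. d i = 1) \<and> d 0 = 1 \<and>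
      (\<forall>e\<in>E. \<forall>i\<in>e. prod d (e - {i}) = d i ^ (m - 1))}"

lemma diag_stabilizes_adj_tensor_iff:
  assumes U: "uniform_hypergraph m n E" and m: "m \<ge> 2" and d: "\<forall>i<n. d i \<noteq> 0"
  shows "diag_stabilizes m n (adj_tensor m E) d \<longleftrightarrow>
         (\<forall>e\<in>E. \<forall>i\<in>e. prod d (e - {i}) = d i ^ (m - 1))"
proof
  assume S: "diag_stabilizes m n (adj_tensor m E) d"
  show "\<forall>e\<in>E. \<forall>i\<in>e. prod d (e - {i}) = d i ^ (m - 1)"
  proof (intro ballI)
    fix e i assume e: "e \<in> E" and i: "i \<in> e"
    obtain js where js: "set js = e - {i}" "distinct js"
      using finite_distinct_list[of "e - {i}"] uniform_hypergraph_edge(3)[OF U e] by blast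
    have "length js = card (e - {i})" using js by (metis distinct_card)
    also have "\<dots> = m - 1" using uniform_hypergraph_edge(2)[OF U e] i by simp
    finally have lj: "length js = m - 1" .
    have ein: "e \<subseteq> {..<n}" using uniform_hypergraph_edge(1)[OF U e] .
    have ie: "insert i (set js) = e" using js i by auto
    have "i # js \<in> tensor_indices m n" unfolding tensor_indices_def using lj m ein ie by auto
    with S have "inverse (d i ^ (m - 1)) * adj_tensor m E (i # js) * prod_list (map d js)
        = adj_tensor m E (i # js)"
      unfolding diag_stabilizes_def by fastforce
    moreover have "adj_tensor m E (i # js) = 1 / of_nat (fact (m - 1))"
      unfolding adj_tensor_def using lj m ie e by simp
    moreover have "prod_list (map d js) = prod d (e - {i})"
      using js by (metis prod.distinct_set_conv_list)
    moreover have "d i \<noteq> 0" using d ein i by auto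
    ultimately show "prod d (e - {i}) = d i ^ (m - 1)" by (simp add: field_simps)
  qed
next
  assume C: "\<forall>e\<in>E. \<forall>i\<in>e. prod d (e - {i}) = d i ^ (m - 1)"
  show "diag_stabilizes m n (adj_tensor m E) d"
    unfolding diag_stabilizes_def
  proof
    fix "is" assume "is": "is \<in> tensor_indices m n"
    show "inverse (d (hd is) ^ (m - 1)) * adj_tensor m E is * prod_list (map d (tl is))
        = adj_tensor m E is"
    proof (cases "set is \<in> E")
      case False then show ?thesis unfolding adj_tensor_def by simp
    next
      case True
      have li: "length is = m" using "is" unfolding tensor_indices_def by simp
      then obtain i js where ij: "is = i # js" using m by (cases "is") auto
      have "distinct is"
        using uniform_hypergraph_edge(2)[OF U True] li by (simp add: card_distinct)
      then have "prod_list (map d js) = prod d (set is - {i})"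
        using ij by (simp add: prod.distinct_set_conv_list)
      moreover have "d i \<noteq> 0" using "is" ij d unfolding tensor_indices_def by auto
      moreover have "prod d (set is - {i}) = d i ^ (m - 1)"
        using C True ij by (meson list.set_intros(1))
      ultimately show ?thesis using ij by (simp add: field_simps)
    qed
  qed
qed

lemma hg_stab_index_eq_card:
  assumes "uniform_hypergraph m n E" and "m \<ge> 2"
  shows "hg_stab_index m n E = card (hg_stabilizers m n E)"
proof -
  have "{d. (\<forall>i<n. d i \<noteq> 0) \<and> (\<forall>i\<ge>n. d i = 1) \<and> d 0 = 1 \<and>
           diag_stabilizes m n (adj_tensor m E) d} = hg_stabilizers m n E"
    unfolding hg_stabilizers_def using diag_stabilizes_adj_tensor_iff[OF assms] by blast
  then show ?thesis unfolding hg_stab_index_def stabilizing_index_def by simp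
qed

lemma hg_connected_propagate:
  assumes "hg_connected n E" and "k < n" "P k"
    and step: "\<And>e i j. e \<in> E \<Longrightarrow> i \<in> e \<Longrightarrow> j \<in> e \<Longrightarrow> P i \<Longrightarrow> P j"
    and "j < n"
  shows "P j"
proof -
  have "(k, j) \<in> ({(x, y). \<exists>e\<in>E. x \<in> e \<and> y \<in> e})\<^sup>*"
    using assms unfolding hg_connected_def by blast
  then show "P j"
    by (induction rule: rtrancl_induct) (use assms(3) step in blast)+
qed

lemma hg_connected_edge_across:
  assumes "hg_connected n E" and "k < n" "P k" and "j < n" "\<not> P j"
  obtains e i l where "e \<in> E" "i \<in> e" "l \<in> e" "P i" "\<not> P l"
  using hg_connected_propagate[of n E k P j] assms by blast

lemma one_in_hg_stabilizers: "(\<lambda>_. 1) \<in> hg_stabilizers m n E"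
  unfolding hg_stabilizers_def by simp

lemma hg_stabilizer_nonzero: "d \<in> hg_stabilizers m n E \<Longrightarrow> d i \<noteq> 0"
  unfolding hg_stabilizers_def by (cases "i < n") auto

lemma hg_stabilizer_pow_eq_1:
  assumes U: "uniform_hypergraph m n E" and C: "hg_connected n E" and n: "n \<ge> 1"
    and m: "m \<ge> 2" and d: "d \<in> hg_stabilizers m n E"
  shows "d i ^ m = 1"
proof (cases "i < n")
  case False then show ?thesis using d unfolding hg_stabilizers_def by simp
next
  case True
  have edge: "d j ^ m = prod d e" if "e \<in> E" "j \<in> e" for e j
  proof -
    have "prod d e = d j * prod d (e - {j})"
      using uniform_hypergraph_edge(3)[OF U that(1)] that(2) by (simp add: prod.remove)
    also have "\<dots> = d j ^ m"
      using d that m unfolding hg_stabilizers_def by (simp add: power_eq_if)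
    finally show ?thesis by simp
  qed
  show ?thesis
    by (rule hg_connected_propagate[OF C, of 0]) (use n d True edge in \<open>auto simp: hg_stabilizers_def\<close>)
qed

lemma norm_hg_stabilizer:
  assumes "uniform_hypergraph m n E" "hg_connected n E" "n \<ge> 1" "m \<ge> 2"
    and "d \<in> hg_stabilizers m n E"
  shows "cmod (d i) = 1"
proof -
  have "cmod (d i) ^ m = 1 ^ m"
    using hg_stabilizer_pow_eq_1[OF assms] by (metis norm_one norm_power power_one)
  then show ?thesis using assms(4) by (subst (asm) power_eq_iff_eq_base) auto
qed

lemma finite_hg_stabilizers:
  assumes "uniform_hypergraph m n E" "hg_connected n E" "n \<ge> 1" "m \<ge> 2"
  shows "finite (hg_stabilizers m n E)"
proof -
  define R where "R = {z::complex. z ^ m = 1}"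
  have "finite R" unfolding R_def using assms(4) by (intro finite_roots_unity) simp
  then have "finite ((\<lambda>f i. if i < n then f i else 1) ` PiE {..<n} (\<lambda>_. R))"
    by (simp add: finite_PiE)
  moreover have "hg_stabilizers m n E \<subseteq> (\<lambda>f i. if i < n then f i else 1) ` PiE {..<n} (\<lambda>_. R)"
  proof
    fix d assume d: "d \<in> hg_stabilizers m n E"
    have "d = (\<lambda>i. if i < n then restrict d {..<n} i else 1)"
      using d unfolding hg_stabilizers_def by (auto simp: fun_eq_iff)
    moreover have "restrict d {..<n} \<in> PiE {..<n} (\<lambda>_. R)"
      using hg_stabilizer_pow_eq_1[OF assms d] unfolding R_def by auto
    ultimately show "d \<in> (\<lambda>f i. if i < n then f i else 1) ` PiE {..<n} (\<lambda>_. R)" by blast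
  qed
  ultimately show ?thesis by (rule finite_subset[rotated])
qed

lemma hg_stabilizers_antimono: "E \<subseteq> E' \<Longrightarrow> hg_stabilizers m n E' \<subseteq> hg_stabilizers m n E"
  unfolding hg_stabilizers_def by blast

lemma hg_stabilizers_mult:
  "d \<in> hg_stabilizers m n E \<Longrightarrow> d' \<in> hg_stabilizers m n E \<Longrightarrow>
     (\<lambda>i. d i * d' i) \<in> hg_stabilizers m n E"
  unfolding hg_stabilizers_def by (auto simp: prod.distrib power_mult_distrib)

lemma hg_stabilizers_inverse:
  assumes "d \<in> hg_stabilizers m n E"
  shows "(\<lambda>i. inverse (d i)) \<in> hg_stabilizers m n E"
proof -
  have "prod (\<lambda>k. inverse (d k)) A = inverse (prod d A)" for A
    using prod_inversef[of d A] by (simp add: comp_def)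
  then show ?thesis using assms unfolding hg_stabilizers_def by (auto simp: power_inverse)
qed

definition hg_stab_group :: "nat \<Rightarrow> nat \<Rightarrow> nat set set \<Rightarrow> (nat \<Rightarrow> complex) monoid" where
  "hg_stab_group m n E =
     \<lparr>carrier = hg_stabilizers m n E, monoid.mult = (\<lambda>d d' i. d i * d' i), one = (\<lambda>_. 1)\<rparr>"

lemma comm_group_hg_stab_group: "comm_group (hg_stab_group m n E)"
proof (rule comm_groupI)
  fix d assume d: "d \<in> carrier (hg_stab_group m n E)"
  then have "(\<lambda>i. inverse (d i)) \<otimes>\<^bsub>hg_stab_group m n E\<^esub> d = \<one>\<^bsub>hg_stab_group m n E\<^esub>"
    unfolding hg_stab_group_def by (simp add: fun_eq_iff hg_stabilizer_nonzero)
  with d show "\<exists>d'\<in>carrier (hg_stab_group m n E).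
      d' \<otimes>\<^bsub>hg_stab_group m n E\<^esub> d = \<one>\<^bsub>hg_stab_group m n E\<^esub>"
    using hg_stabilizers_inverse unfolding hg_stab_group_def by fastforce
qed (auto simp: hg_stab_group_def hg_stabilizers_mult mult.assoc mult.commute,
     simp add: hg_stabilizers_def)

lemma card_hg_stabilizers_dvd:
  assumes "E \<subseteq> E'"
  shows "card (hg_stabilizers m n E') dvd card (hg_stabilizers m n E)"
proof -
  interpret comm_group "hg_stab_group m n E" by (rule comm_group_hg_stab_group)
  have sub: "subgroup (hg_stabilizers m n E') (hg_stab_group m n E)"
  proof (rule group_incl_imp_subgroup)
    show "hg_stabilizers m n E' \<subseteq> carrier (hg_stab_group m n E)"
      using hg_stabilizers_antimono[OF assms(1)] unfolding hg_stab_group_def by simp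
    have "hg_stab_group m n E\<lparr>carrier := hg_stabilizers m n E'\<rparr> = hg_stab_group m n E'"
      unfolding hg_stab_group_def by simp
    then show "group (hg_stab_group m n E\<lparr>carrier := hg_stabilizers m n E'\<rparr>)"
      using comm_group_hg_stab_group[of m n E'] by (simp add: comm_group_def)
  qed
  have "card (rcosets\<^bsub>hg_stab_group m n E\<^esub> hg_stabilizers m n E') * card (hg_stabilizers m n E')
      = card (hg_stabilizers m n E)"
    using lagrange[OF sub] unfolding Coset.order_def hg_stab_group_def by simp
  then show ?thesis by (metis dvd_triv_right)
qed

section \<open>A positive eigenvector from the hypergraph Lagrangian\<close>

definition hg_lagrangian :: "nat set set \<Rightarrow> (nat \<Rightarrow> real) \<Rightarrow> real" where
  "hg_lagrangian E x = (\<Sum>e\<in>E. prod x e)"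

definition nonneg_sphere :: "nat \<Rightarrow> nat \<Rightarrow> (nat \<Rightarrow> real) set" where
  "nonneg_sphere m n = {x. (\<forall>i. 0 \<le> x i) \<and> (\<forall>i\<ge>n. x i = 0) \<and> (\<Sum>i<n. x i ^ m) = 1}"

lemma continuous_on_coordinate: "continuous_on S (\<lambda>x::nat \<Rightarrow> real. x i)"
  by (rule continuous_on_subset[OF continuous_on_product_coordinates]) simp

lemma compact_nonneg_sphere:
  assumes "m \<ge> 1" shows "compact (nonneg_sphere m n)"
proof -
  define B where "B = PiE UNIV (\<lambda>i::nat. if i < n then {0..1::real} else {0})"
  have "compactin (product_topology (\<lambda>i. euclidean) UNIV) B"
    unfolding B_def by (subst compactin_PiE) auto
  then have "compact B" by (simp add: euclidean_product_topology)
  moreover have "closed {x::nat \<Rightarrow> real. (\<Sum>i<n. x i ^ m) = 1}"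
    by (rule closed_Collect_eq; intro continuous_intros continuous_on_coordinate)
  moreover have "nonneg_sphere m n = B \<inter> {x. (\<Sum>i<n. x i ^ m) = 1}"
  proof (intro Set.set_eqI iffI)
    fix x assume x: "x \<in> nonneg_sphere m n"
    have "x i \<le> 1" if "i < n" for i
    proof -
      have "x i ^ m \<le> (\<Sum>i<n. x i ^ m)"
        by (rule member_le_sum) (use x that in \<open>auto simp: nonneg_sphere_def\<close>)
      then show ?thesis using x assms by (simp add: nonneg_sphere_def power_le_one_iff)
    qed
    moreover have "x i \<ge> 0" "i \<ge> n \<Longrightarrow> x i = 0" for i
      using x by (auto simp: nonneg_sphere_def)
    ultimately have "\<forall>i. x i \<in> (if i < n then {0..1} else {0})" by simp
    then show "x \<in> B \<inter> {x. (\<Sum>i<n. x i ^ m) = 1}"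
      using x unfolding B_def nonneg_sphere_def by (simp add: PiE_iff)
  next
    fix x assume "x \<in> B \<inter> {x. (\<Sum>i<n. x i ^ m) = 1}"
    then have xB: "\<forall>i. x i \<in> (if i < n then {0..1} else {0})" and "(\<Sum>i<n. x i ^ m) = 1"
      unfolding B_def by (auto simp: PiE_iff)
    moreover have "0 \<le> x i" and "i \<ge> n \<Longrightarrow> x i = 0" for i
      using xB[rule_format, of i] by (cases "i < n"; simp)+
    ultimately show "x \<in> nonneg_sphere m n" unfolding nonneg_sphere_def by blast
  qed
  ultimately show ?thesis by auto
qed

lemma hg_lagrangian_nonneg: "(\<And>i. 0 \<le> x i) \<Longrightarrow> 0 \<le> hg_lagrangian E x"
  unfolding hg_lagrangian_def by (intro sum_nonneg prod_nonneg) auto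

text \<open>By \<open>m\<close>-homogeneity, the maximum of the Lagrangian on the sphere bounds it everywhere.\<close>

lemma hg_lagrangian_le_max:
  assumes U: "uniform_hypergraph m n E" and m: "m \<ge> 2"
    and max: "\<forall>z\<in>nonneg_sphere m n. hg_lagrangian E z \<le> F"
    and y: "\<And>i. 0 \<le> y i" "\<And>i. i \<ge> n \<Longrightarrow> y i = 0" and s: "(\<Sum>i<n. y i ^ m) > 0"
  shows "hg_lagrangian E y \<le> F * (\<Sum>i<n. y i ^ m)"
proof -
  define s where "s = (\<Sum>i<n. y i ^ m)"
  define c where "c = root m s"
  have s0: "s > 0" using assms unfolding s_def by simp
  have c0: "c > 0" and cm: "c ^ m = s" unfolding c_def using s0 m by simp_all
  define z where "z i = y i / c" for i
  have "(\<Sum>i<n. z i ^ m) = (\<Sum>i<n. y i ^ m / s)" unfolding z_def by (simp add: power_divide cm)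
  also have "\<dots> = 1" using s0 unfolding s_def by (simp add: sum_divide_distrib[symmetric])
  finally have "z \<in> nonneg_sphere m n" unfolding nonneg_sphere_def z_def using y c0 by auto
  then have "hg_lagrangian E z \<le> F" using max by blast
  moreover have "hg_lagrangian E z = hg_lagrangian E y / s"
  proof -
    have "prod z e = prod y e / s" if "e \<in> E" for e
      using uniform_hypergraph_edge(2)[OF U that] cm unfolding z_def by (simp add: prod_dividef)
    then show ?thesis unfolding hg_lagrangian_def by (simp add: sum_divide_distrib)
  qed
  ultimately show ?thesis using s0 unfolding s_def by (simp add: field_simps)
qed

lemma hg_lagrangian_update:
  assumes "uniform_hypergraph m n E"
  shows "hg_lagrangian E (x(i := x i + t)) = hg_lagrangian E x + t * hg_adj_apply E x i"
proof -
  have "prod (x(i := x i + t)) e = prod x e + (if i \<in> e then t * prod x (e - {i}) else 0)"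
    if e: "e \<in> E" for e
  proof (cases "i \<in> e")
    case True
    have "prod (x(i := x i + t)) e = (x i + t) * prod (x(i := x i + t)) (e - {i})"
      using uniform_hypergraph_edge(3)[OF assms e] True by (simp add: prod.remove)
    also have "prod (x(i := x i + t)) (e - {i}) = prod x (e - {i})" by (rule prod.cong) auto
    finally show ?thesis
      using uniform_hypergraph_edge(3)[OF assms e] True by (simp add: prod.remove algebra_simps)
  next
    case False
    then have "prod (x(i := x i + t)) e = prod x e" by (intro prod.cong) auto
    then show ?thesis using False by simp
  qed
  then have "hg_lagrangian E (x(i := x i + t))
      = hg_lagrangian E x + (\<Sum>e\<in>E. if i \<in> e then t * prod x (e - {i}) else 0)"
    unfolding hg_lagrangian_def by (simp add: sum.distrib)
  also have "(\<Sum>e\<in>E. if i \<in> e then t * prod x (e - {i}) else 0) = t * hg_adj_apply E x i"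
    unfolding hg_adj_apply_def sum_distrib_left
    by (simp add: sum.inter_filter uniform_hypergraph_finite[OF assms])
  finally show ?thesis .
qed

lemma higher_order_bound_absurd:
  fixes P C :: real
  assumes "k < m" "P > 0" "C \<ge> 0" and bound: "\<And>t. 0 < t \<Longrightarrow> t \<le> 1 \<Longrightarrow> t ^ k * P \<le> C * t ^ m"
  shows False
proof -
  define t where "t = min 1 (P / (2 * (C + 1)))"
  have t: "0 < t" "t \<le> 1" "t \<le> P / (2 * (C + 1))" unfolding t_def using assms by auto
  have "t ^ m = t ^ k * t ^ (m - k)" using assms(1) by (simp flip: power_add)
  then have "t ^ k * P \<le> t ^ k * (C * t ^ (m - k))"
    using bound[OF t(1,2)] by (simp add: mult.left_commute)
  then have "P \<le> C * t ^ (m - k)" using t by (simp add: mult_le_cancel_left_pos)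
  also have "\<dots> \<le> C * t"
    using assms t power_decreasing[of 1 "m - k" t] by (simp add: mult_left_mono)
  also have "\<dots> \<le> (C + 1) * t" using t by simp
  also have "\<dots> \<le> P / 2" using t assms by (simp add: field_simps)
  finally show False using assms by simp
qed

text \<open>Lifting the zero coordinates \<open>W\<close> of an edge to \<open>t\<close> gains \<open>t ^ card W\<close> times the
  product over the other vertices of the edge, but costs only \<open>O(t ^ m)\<close> in norm.\<close>

lemma hg_lagrangian_maximizer_lift_zeros:
  assumes U: "uniform_hypergraph m n E" and m: "m \<ge> 2"
    and x: "x \<in> nonneg_sphere m n"
    and max: "\<forall>z\<in>nonneg_sphere m n. hg_lagrangian E z \<le> hg_lagrangian E x"
    and e: "e \<in> E" "i \<in> e" "x i = 0" and t: "0 < t"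
  shows "t ^ card {l\<in>e. x l = 0} * prod x {l\<in>e. x l \<noteq> 0}
         \<le> hg_lagrangian E x * card {l\<in>e. x l = 0} * t ^ m"
proof -
  define W where "W = {l\<in>e. x l = 0}"
  define y where "y l = (if l \<in> W then t else x l)" for l
  have x0: "\<And>i. 0 \<le> x i" and xn: "\<And>i. i \<ge> n \<Longrightarrow> x i = 0" and xs: "(\<Sum>i<n. x i ^ m) = 1"
    using x unfolding nonneg_sphere_def by auto
  have fe: "finite e" and en: "e \<subseteq> {..<n}" using uniform_hypergraph_edge[OF U e(1)] by auto
  have WE: "W \<subseteq> e" and Wn: "W \<subseteq> {..<n}" using en unfolding W_def by auto
  have fW: "finite W" using fe WE finite_subset by blast
  have ys: "(\<Sum>l<n. y l ^ m) = 1 + card W * t ^ m"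
  proof -
    have "(\<Sum>l<n. y l ^ m) = (\<Sum>l<n. x l ^ m + (if l \<in> W then t ^ m else 0))"
      by (rule sum.cong[OF refl]) (use m in \<open>auto simp: y_def W_def\<close>)
    also have "\<dots> = 1 + (\<Sum>l<n. if l \<in> W then t ^ m else 0)" by (simp add: sum.distrib xs)
    also have "(\<Sum>l<n. if l \<in> W then t ^ m else 0) = (\<Sum>l\<in>{..<n} \<inter> W. t ^ m)"
      by (rule sum.inter_restrict[symmetric]) simp
    finally show ?thesis using Wn by (simp add: Int_absorb1)
  qed
  have "0 \<le> y l" and "l \<ge> n \<Longrightarrow> y l = 0" for l
    using x0[of l] xn[of l] Wn t unfolding y_def by auto
  moreover have "0 < (\<Sum>l<n. y l ^ m)" unfolding ys using t by (simp add: add_pos_nonneg)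
  ultimately have "hg_lagrangian E y \<le> hg_lagrangian E x * (\<Sum>l<n. y l ^ m)"
    by (rule hg_lagrangian_le_max[OF U m max])
  then have "hg_lagrangian E y \<le> hg_lagrangian E x * (1 + card W * t ^ m)" unfolding ys .
  moreover have "hg_lagrangian E y \<ge> hg_lagrangian E x + t ^ card W * prod x (e - W)"
  proof -
    have fE: "finite E" using uniform_hypergraph_finite[OF U] .
    have "prod x e = 0" using e fe by (metis prod_zero_iff)
    moreover have "prod y e = t ^ card W * prod x (e - W)"
    proof -
      have "prod y e = prod y W * prod y (e - W)"
        using prod.subset_diff[OF WE fe] by (simp add: mult.commute)
      also have "prod y (e - W) = prod x (e - W)" unfolding y_def by (rule prod.cong) auto
      finally show ?thesis unfolding y_def by simp
    qed
    moreover have "(\<Sum>e'\<in>E - {e}. prod x e') \<le> (\<Sum>e'\<in>E - {e}. prod y e')"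
      by (intro sum_mono prod_mono) (use x0 t in \<open>auto simp: y_def W_def\<close>)
    ultimately show ?thesis
      unfolding hg_lagrangian_def using fE e(1) by (simp add: sum.remove)
  qed
  moreover have "e - W = {l\<in>e. x l \<noteq> 0}" unfolding W_def by auto
  ultimately show ?thesis unfolding W_def by (simp add: algebra_simps)
qed

lemma hg_lagrangian_maximizer_pos:
  assumes U: "uniform_hypergraph m n E" and C: "hg_connected n E" and m: "m \<ge> 2"
    and x: "x \<in> nonneg_sphere m n"
    and max: "\<forall>z\<in>nonneg_sphere m n. hg_lagrangian E z \<le> hg_lagrangian E x"
    and i: "i < n"
  shows "0 < x i"
proof (rule ccontr)
  have x0: "\<And>i. 0 \<le> x i" and xs: "(\<Sum>i<n. x i ^ m) = 1"
    using x unfolding nonneg_sphere_def by auto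
  assume "\<not> 0 < x i"
  then have "x i = 0" using x0[of i] by simp
  moreover obtain k where "k < n" "x k \<noteq> 0"
  proof (rule ccontr)
    assume "\<not> thesis"
    then have "\<forall>k<n. x k = 0" using that by blast
    then have "(\<Sum>i<n. x i ^ m) = 0" using m by simp
    with xs show False by simp
  qed
  ultimately obtain e j l where e: "e \<in> E" "j \<in> e" "l \<in> e" "x j \<noteq> 0" "x l = 0"
    using hg_connected_edge_across[OF C, of k "\<lambda>j. x j \<noteq> 0" i] i by metis
  define W where "W = {l\<in>e. x l = 0}"
  have fe: "finite e" and ce: "card e = m" using uniform_hypergraph_edge[OF U e(1)] by auto
  have "W \<subseteq> e" "j \<notin> W" "l \<in> W" using e unfolding W_def by auto
  then have WE: "W \<subset> e" using e(2) by blast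
  have "finite W" using fe WE finite_subset by blast
  then have "card W \<ge> 1" using \<open>l \<in> W\<close> by (metis One_nat_def Suc_leI card_gt_0_iff empty_iff)
  moreover have "card W < m" using psubset_card_mono[OF fe WE] ce by simp
  moreover have "0 < prod x {l\<in>e. x l \<noteq> 0}" using x0 by (intro prod_pos) (simp add: order_less_le)
  moreover have "0 \<le> hg_lagrangian E x * card W" using hg_lagrangian_nonneg x0 by simp
  moreover have "t ^ card W * prod x {l\<in>e. x l \<noteq> 0} \<le> hg_lagrangian E x * card W * t ^ m"
    if "0 < t" for t
    using hg_lagrangian_maximizer_lift_zeros[OF U m x max e(1,3,5) that] unfolding W_def .
  ultimately show False using higher_order_bound_absurd[of "card W" m] by blast
qed

lemma hg_lagrangian_maximizer_eigen:
  assumes U: "uniform_hypergraph m n E" and m: "m \<ge> 2"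
    and x: "x \<in> nonneg_sphere m n"
    and max: "\<forall>z\<in>nonneg_sphere m n. hg_lagrangian E z \<le> hg_lagrangian E x"
    and pos: "0 < x i" and i: "i < n"
  shows "hg_adj_apply E x i = (m * hg_lagrangian E x) * x i ^ (m - 1)"
proof -
  define F where "F = hg_lagrangian E x"
  define N where "N = hg_adj_apply E x i"
  have x0: "\<And>i. 0 \<le> x i" and xn: "\<And>i. i \<ge> n \<Longrightarrow> x i = 0" and xs: "(\<Sum>i<n. x i ^ m) = 1"
    using x unfolding nonneg_sphere_def by auto
  define g where "g t = F * ((x i + t) ^ m - x i ^ m) - t * N" for t
  have "g 0 \<le> g t" if t: "\<bar>0 - t\<bar> < x i" for t
  proof -
    define y where "y = x(i := x i + t)"
    have ys: "(\<Sum>l<n. y l ^ m) = 1 - x i ^ m + (x i + t) ^ m"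
      using xs i unfolding y_def by (simp add: sum.remove)
    have "0 < (x i + t) ^ m" using t by simp
    moreover have "0 \<le> (\<Sum>l\<in>{..<n}-{i}. x l ^ m)" using x0 by (simp add: sum_nonneg)
    ultimately have pos_y: "0 < (\<Sum>l<n. y l ^ m)" using ys xs i by (simp add: sum.remove)
    have "0 \<le> y l" for l using x0[of l] t unfolding y_def by (auto simp: abs_less_iff)
    moreover have "y l = 0" if "l \<ge> n" for l using xn[OF that] that i unfolding y_def by simp
    ultimately have "hg_lagrangian E y \<le> F * (\<Sum>l<n. y l ^ m)"
      using hg_lagrangian_le_max[OF U m max _ _ pos_y] unfolding F_def by blast
    then have "F + t * N \<le> F * (1 - x i ^ m + (x i + t) ^ m)"
      using ys hg_lagrangian_update[OF U, of x i t] unfolding y_def F_def N_def by simp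
    then show ?thesis unfolding g_def by (simp add: algebra_simps)
  qed
  moreover have "(g has_real_derivative (F * (m * x i ^ (m - 1)) - N)) (at 0)"
    unfolding g_def by (auto intro!: derivative_eq_intros)
  ultimately have "F * (m * x i ^ (m - 1)) - N = 0"
    using pos by (intro DERIV_local_min[of g _ 0 "x i"]) auto
  then show ?thesis unfolding N_def F_def by (simp add: algebra_simps)
qed

theorem hg_perron_vector_exists:
  assumes U: "uniform_hypergraph m n E" and C: "hg_connected n E" and m: "m \<ge> 2" and n: "n \<ge> 1"
  obtains v :: "nat \<Rightarrow> real" and r where "\<forall>i<n. 0 < v i" "v 0 = 1" "r \<ge> 0"
    "\<forall>i<n. hg_adj_apply E v i = r * v i ^ (m - 1)"
proof -
  have "(\<Sum>i<n. (if i = 0 then 1 else 0::real) ^ m) = (\<Sum>i<n. if i = 0 then 1 else 0)"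
    by (rule sum.cong) (use m in auto)
  then have "(\<lambda>i. if i = 0 then 1 else 0) \<in> nonneg_sphere m n"
    using n by (simp add: nonneg_sphere_def)
  then have "nonneg_sphere m n \<noteq> {}" by blast
  moreover have "continuous_on (nonneg_sphere m n) (hg_lagrangian E)"
    unfolding hg_lagrangian_def using uniform_hypergraph_finite[OF U]
    by (intro continuous_intros continuous_on_coordinate)
  moreover have "compact (nonneg_sphere m n)" using m by (intro compact_nonneg_sphere) simp
  ultimately obtain x where x: "x \<in> nonneg_sphere m n"
    and max: "\<forall>z\<in>nonneg_sphere m n. hg_lagrangian E z \<le> hg_lagrangian E x"
    using continuous_attains_sup[of "nonneg_sphere m n" "hg_lagrangian E"] by blast
  have pos: "\<forall>i<n. 0 < x i" using hg_lagrangian_maximizer_pos[OF U C m x max] by blast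
  define r where "r = m * hg_lagrangian E x"
  define v where "v i = x i / x 0" for i
  have x00: "x 0 > 0" using pos n by simp
  have eigen: "hg_adj_apply E v i = r * v i ^ (m - 1)" if i: "i < n" for i
  proof -
    have "prod v (e - {i}) = prod x (e - {i}) / x 0 ^ (m - 1)" if "e \<in> {e\<in>E. i \<in> e}" for e
      using uniform_hypergraph_edge[OF U] that unfolding v_def by (simp add: prod_dividef)
    then have "hg_adj_apply E v i = hg_adj_apply E x i / x 0 ^ (m - 1)"
      unfolding hg_adj_apply_def by (simp add: sum_divide_distrib)
    then show ?thesis
      using hg_lagrangian_maximizer_eigen[OF U m x max pos[rule_format, OF i] i]
      unfolding r_def v_def by (simp add: power_divide)
  qed
  have "\<forall>i<n. 0 < v i" "v 0 = 1" using pos x00 unfolding v_def by auto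
  moreover have "r \<ge> 0"
    unfolding r_def using hg_lagrangian_nonneg[of x E] x by (simp add: nonneg_sphere_def)
  moreover have "\<forall>i<n. hg_adj_apply E v i = r * v i ^ (m - 1)" using eigen by blast
  ultimately show ?thesis by (rule that)
qed

section \<open>The eigenvectors of the spectral radius\<close>

lemma norm_hg_adj_apply_le:
  "cmod (hg_adj_apply E y i) \<le> hg_adj_apply E (\<lambda>j. cmod (y j)) i"
  unfolding hg_adj_apply_def by (rule order.trans[OF norm_sum]) (simp add: prod_norm)

lemma hg_adj_apply_of_real:
  "hg_adj_apply E (\<lambda>j. complex_of_real (a j)) i = complex_of_real (hg_adj_apply E a i)"
  unfolding hg_adj_apply_def by simp

lemma norm_sum_eq_imp_aligned:
  fixes f :: "'a \<Rightarrow> complex"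
  assumes fA: "finite A" and eq: "cmod (sum f A) = (\<Sum>a\<in>A. cmod (f a))" and a: "a \<in> A"
  shows "f a * cmod (sum f A) = cmod (f a) * sum f A"
proof (cases "sum f A = 0")
  case True
  then have "(\<Sum>a\<in>A. cmod (f a)) = 0" using eq by simp
  then have "\<forall>a\<in>A. cmod (f a) = 0" using fA by (subst (asm) sum_nonneg_eq_0_iff) auto
  then show ?thesis using a True by simp
next
  case False
  define s where "s = sum f A"
  have le: "Re (cnj s * f b) \<le> cmod s * cmod (f b)" for b
    using complex_Re_le_cmod[of "cnj s * f b"] by (simp add: norm_mult)
  have "(\<Sum>b\<in>A. Re (cnj s * f b)) = Re (cnj s * s)" unfolding s_def by (simp add: sum_distrib_left)
  also have "cnj s * s = of_real ((cmod s)\<^sup>2)" by (metis complex_norm_square mult.commute)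
  also have "Re \<dots> = cmod s * (\<Sum>b\<in>A. cmod (f b))" using eq unfolding s_def by (simp add: power2_eq_square)
  finally have "(\<Sum>b\<in>A. cmod s * cmod (f b) - Re (cnj s * f b)) = 0"
    by (simp add: sum_subtractf sum_distrib_left)
  then have Re_eq: "Re (cnj s * f a) = cmod s * cmod (f a)"
    using fA le a by (subst (asm) sum_nonneg_eq_0_iff) auto
  moreover have "cmod (cnj s * f a) = cmod s * cmod (f a)" by (simp add: norm_mult)
  ultimately have "Im (cnj s * f a) = 0" using cmod_power2[of "cnj s * f a"] by simp
  then have "cnj s * f a = of_real (cmod s * cmod (f a))" using Re_eq by (simp add: complex_eq_iff)
  then have "s * (cnj s * f a) = s * of_real (cmod s * cmod (f a))" by simp
  moreover have "s * cnj s = of_real (cmod s) * of_real (cmod s)"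
    by (simp flip: complex_norm_square add: power2_eq_square)
  then have "s * (cnj s * f a) = of_real (cmod s) * (of_real (cmod s) * f a)"
    by (simp flip: mult.assoc)
  ultimately have "of_real (cmod s) * (of_real (cmod s) * f a) = of_real (cmod s) * (s * cmod (f a))"
    by (simp add: algebra_simps)
  then show ?thesis using False unfolding s_def by (simp add: mult.commute)
qed

locale hg_perron =
  fixes m n :: nat and E :: "nat set set" and v :: "nat \<Rightarrow> real" and r :: real
  assumes U: "uniform_hypergraph m n E" and C: "hg_connected n E"
    and m2: "m \<ge> 2" and n1: "n \<ge> 1"
    and v_pos: "\<forall>i<n. 0 < v i" and v0: "v 0 = 1" and r_nonneg: "r \<ge> 0"
    and v_eigen: "\<forall>i<n. hg_adj_apply E v i = r * v i ^ (m - 1)"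
begin

abbreviation "A \<equiv> adj_tensor m E"

definition diag_perron :: "(nat \<Rightarrow> complex) \<Rightarrow> nat \<Rightarrow> complex" where
  "diag_perron d i = (if i < n then d i * complex_of_real (v i) else 0)"

lemma edge_subset: "e \<in> E \<Longrightarrow> e \<subseteq> {..<n}"
  using uniform_hypergraph_edge(1)[OF U] .

lemma eigenpair_iff:
  "tensor_eigenpair m n A lam y \<longleftrightarrow>
     is_vec n y \<and> (\<exists>i<n. y i \<noteq> 0) \<and> (\<forall>i<n. hg_adj_apply E y i = lam * y i ^ (m - 1))"
  unfolding tensor_eigenpair_def using tensor_apply_adj_tensor[OF U m2] by simp

lemma hg_adj_apply_mono:
  assumes "\<forall>j<n. 0 \<le> a j \<and> a j \<le> b j"
  shows "hg_adj_apply E a i \<le> (hg_adj_apply E b i :: real)"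
  unfolding hg_adj_apply_def
  by (intro sum_mono prod_mono) (use assms edge_subset in blast)

lemma hg_adj_apply_scale:
  "hg_adj_apply E (\<lambda>j. c * a j) i = c ^ (m - 1) * (hg_adj_apply E a i :: 'a::comm_ring_1)"
  unfolding hg_adj_apply_def sum_distrib_left
  by (rule sum.cong[OF refl]) (use uniform_hypergraph_edge[OF U] in \<open>simp add: prod.distrib\<close>)

lemma hg_adj_apply_dominated:
  assumes "\<forall>j<n. cmod (y j) \<le> t * v j" and "i < n"
  shows "hg_adj_apply E (\<lambda>j. cmod (y j)) i \<le> r * (t * v i) ^ (m - 1)"
proof -
  have "hg_adj_apply E (\<lambda>j. cmod (y j)) i \<le> hg_adj_apply E (\<lambda>j. t * v j) i"
    by (rule hg_adj_apply_mono) (use assms in auto)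
  also have "\<dots> = r * (t * v i) ^ (m - 1)"
    using v_eigen assms(2) by (simp add: hg_adj_apply_scale power_mult_distrib)
  finally show ?thesis .
qed

lemma max_ratio_to_perron:
  assumes "\<exists>k<n. y k \<noteq> 0"
  obtains t i where "t > 0" "i < n" "cmod (y i) = t * v i" "\<forall>j<n. cmod (y j) \<le> t * v j"
proof -
  define q where "q j = cmod (y j) / v j" for j
  define t where "t = Max (q ` {..<n})"
  have "q 0 \<in> q ` {..<n}" using n1 by simp
  then have "t \<in> q ` {..<n}" unfolding t_def by (intro Max_in) auto
  then obtain i where i: "i < n" "q i = t" by auto
  have le: "q j \<le> t" if "j < n" for j unfolding t_def using that by (intro Max_ge) auto
  obtain k where k: "k < n" "y k \<noteq> 0" using assms by blast
  then have "t > 0" using le[OF k(1)] v_pos unfolding q_def by (smt (verit) divide_pos_pos zero_less_norm_iff)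
  moreover have "cmod (y i) = t * v i"
    using i v_pos[rule_format, OF i(1)] unfolding q_def by (simp add: field_simps)
  moreover have "\<forall>j<n. cmod (y j) \<le> t * v j" using le v_pos unfolding q_def by (simp add: field_simps)
  ultimately show ?thesis using that i by blast
qed

lemma eigenvalue_norm_le:
  assumes "tensor_eigenpair m n A lam y"
  shows "cmod lam \<le> r"
proof -
  have y: "\<exists>k<n. y k \<noteq> 0" "\<forall>i<n. hg_adj_apply E y i = lam * y i ^ (m - 1)"
    using assms unfolding eigenpair_iff by auto
  obtain t i where t: "t > 0" "i < n" "cmod (y i) = t * v i" "\<forall>j<n. cmod (y j) \<le> t * v j"
    using max_ratio_to_perron[OF y(1)] by blast
  have "cmod lam * cmod (y i) ^ (m - 1) = cmod (hg_adj_apply E y i)"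
    using y(2) t(2) by (simp add: norm_mult norm_power)
  also have "\<dots> \<le> r * cmod (y i) ^ (m - 1)"
    using norm_hg_adj_apply_le hg_adj_apply_dominated[OF t(4,2)] t(3) by (metis order.trans)
  finally show ?thesis using t v_pos by (simp add: mult_le_cancel_right)
qed

text \<open>If \<open>|y| \<le> t v\<close> with equality at \<open>j\<close>, the chain
  \<open>r |y j| ^ (m - 1) \<le> (A |y|\<^sup>m\<^sup>-\<^sup>1) j \<le> (A (t v)\<^sup>m\<^sup>-\<^sup>1) j = r |y j| ^ (m - 1)\<close>
  collapses, which forces \<open>|y| = t v\<close> on every edge through \<open>j\<close>.\<close>

lemma rho_eigvec_modulus_edge:
  assumes eigen: "\<forall>i<n. hg_adj_apply E y i = of_real r * y i ^ (m - 1)"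
    and bound: "\<forall>j<n. cmod (y j) \<le> t * v j" and t: "t > 0"
    and e: "e \<in> E" "j \<in> e" "l \<in> e" and j_eq: "cmod (y j) = t * v j"
  shows "cmod (y l) = t * v l"
proof (rule ccontr)
  define a where "a k = cmod (y k)" for k
  define b where "b k = t * v k" for k
  have j: "j < n" and l: "l < n" using edge_subset e by auto
  have ab: "0 \<le> a k \<and> a k \<le> b k" "0 < b k" if "k \<in> e' - {j}" "e' \<in> E" for e' k
    using that edge_subset[of e'] bound t v_pos unfolding a_def b_def by auto
  assume "cmod (y l) \<noteq> t * v l"
  then have "a l < b l" using bound l unfolding a_def b_def by fastforce
  moreover have "l \<noteq> j" using \<open>cmod (y l) \<noteq> t * v l\<close> j_eq by blast
  ultimately have "prod a (e - {j}) < prod b (e - {j})"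
    using e ab uniform_hypergraph_edge(3)[OF U e(1)] by (intro prod_mono_strict[of l]) auto
  then have "hg_adj_apply E a j < hg_adj_apply E b j"
    unfolding hg_adj_apply_def using e ab uniform_hypergraph_finite[OF U]
    by (intro sum_strict_mono_ex1) (auto intro!: prod_mono)
  also have "\<dots> = r * a j ^ (m - 1)"
    using v_eigen j j_eq unfolding a_def b_def by (simp add: hg_adj_apply_scale power_mult_distrib)
  also have "\<dots> = cmod (hg_adj_apply E y j)"
    using eigen j r_nonneg unfolding a_def by (simp add: norm_mult norm_power)
  also have "\<dots> \<le> hg_adj_apply E a j" unfolding a_def by (rule norm_hg_adj_apply_le)
  finally show False by simp
qed

lemma rho_eigvec_modulus:
  assumes "tensor_eigenpair m n A (of_real r) y" and "y 0 = 1" and "j < n"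
  shows "cmod (y j) = v j"
proof -
  have y: "\<exists>k<n. y k \<noteq> 0" "\<forall>i<n. hg_adj_apply E y i = of_real r * y i ^ (m - 1)"
    using assms(1) unfolding eigenpair_iff by auto
  obtain t i where t: "t > 0" "i < n" "cmod (y i) = t * v i" "\<forall>j<n. cmod (y j) \<le> t * v j"
    using max_ratio_to_perron[OF y(1)] by blast
  have all: "\<forall>j<n. cmod (y j) = t * v j"
    using hg_connected_propagate[OF C t(2), of "\<lambda>j. cmod (y j) = t * v j"]
      rho_eigvec_modulus_edge[OF y(2) t(4,1)] t(3) by blast
  moreover have "t = 1" using all[rule_format, of 0] n1 assms(2) v0 by simp
  ultimately show ?thesis using assms(3) by simp
qed

text \<open>Once \<open>|y| = v\<close>, the sum \<open>(A y\<^sup>m\<^sup>-\<^sup>1) j\<close> attains the triangle inequality, so each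
  of its summands has the phase of \<open>y j ^ (m - 1)\<close>.\<close>

lemma rho_eigvec_phase:
  assumes eigen: "\<forall>i<n. hg_adj_apply E y i = of_real r * y i ^ (m - 1)"
    and modulus: "\<forall>j<n. cmod (y j) = v j" and e: "e \<in> E" "j \<in> e"
  shows "prod (\<lambda>k. sgn (y k)) (e - {j}) = sgn (y j) ^ (m - 1)"
proof -
  have j: "j < n" using edge_subset e by auto
  have y_polar: "y k = sgn (y k) * of_real (v k)" if "k < n" for k
    using modulus that v_pos[rule_format, OF that] by (simp add: sgn_eq)
  define Ej where "Ej = {e \<in> E. j \<in> e}"
  define f where "f e' = prod y (e' - {j})" for e'
  define pv where "pv = prod v (e - {j})"
  have fEj: "finite Ej" unfolding Ej_def using uniform_hypergraph_finite[OF U] by simp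
  have norm_f: "cmod (f e') = prod v (e' - {j})" if "e' \<in> Ej" for e'
    unfolding f_def prod_norm[symmetric] using that modulus edge_subset unfolding Ej_def
    by (intro prod.cong) auto
  have pv_pos: "pv > 0" unfolding pv_def using v_pos edge_subset e by (intro prod_pos) auto
  have sum_f: "sum f Ej = of_real r * y j ^ (m - 1)"
    using eigen j unfolding f_def Ej_def hg_adj_apply_def by simp
  have "cmod (sum f Ej) = r * v j ^ (m - 1)"
    using sum_f modulus j r_nonneg by (simp add: norm_mult norm_power)
  also have "\<dots> = (\<Sum>e'\<in>Ej. cmod (f e'))"
    using v_eigen j norm_f unfolding hg_adj_apply_def Ej_def by simp
  finally have tri: "cmod (sum f Ej) = (\<Sum>e'\<in>Ej. cmod (f e'))" .
  have "pv \<le> (\<Sum>e'\<in>Ej. cmod (f e'))"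
    unfolding pv_def using e fEj norm_f unfolding Ej_def
    by (metis (mono_tags, lifting) mem_Collect_eq norm_ge_zero member_le_sum)
  then have r_pos: "r > 0" using pv_pos tri \<open>cmod (sum f Ej) = r * v j ^ (m - 1)\<close>
    r_nonneg by (cases "r = 0") auto
  have "f e = prod (\<lambda>k. sgn (y k)) (e - {j}) * of_real pv"
    unfolding f_def pv_def
    using y_polar edge_subset[OF e(1)] by (simp add: prod.distrib[symmetric] subset_iff)
  moreover have "cmod (f e) = pv" unfolding pv_def using norm_f e unfolding Ej_def by simp
  ultimately have "prod (\<lambda>k. sgn (y k)) (e - {j}) * of_real pv * of_real (r * v j ^ (m - 1))
      = of_real pv * (of_real r * (sgn (y j) * of_real (v j)) ^ (m - 1))"
    using norm_sum_eq_imp_aligned[OF fEj tri, of e] sum_f y_polar[OF j] e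
      \<open>cmod (sum f Ej) = r * v j ^ (m - 1)\<close> unfolding Ej_def by simp
  then show ?thesis
    using pv_pos r_pos v_pos[rule_format, OF j] by (simp add: power_mult_distrib field_simps)
qed

lemma diag_perron_eigenpair:
  assumes d: "d \<in> hg_stabilizers m n E"
  shows "tensor_eigenpair m n A (of_real r) (diag_perron d)" and "diag_perron d 0 = 1"
proof -
  have edge: "prod d (e - {i}) = d i ^ (m - 1)" if "e \<in> E" "i \<in> e" for e i
    using d that unfolding hg_stabilizers_def by simp
  show d0: "diag_perron d 0 = 1"
    using n1 d v0 unfolding diag_perron_def hg_stabilizers_def by simp
  have "hg_adj_apply E (diag_perron d) i = of_real r * diag_perron d i ^ (m - 1)" if i: "i < n" for i
  proof -
    have "prod (diag_perron d) (e - {i}) = d i ^ (m - 1) * prod (\<lambda>k. of_real (v k)) (e - {i})"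
      if "e \<in> {e \<in> E. i \<in> e}" for e
    proof -
      have "prod (diag_perron d) (e - {i}) = prod (\<lambda>k. d k * of_real (v k)) (e - {i})"
        using edge_subset that unfolding diag_perron_def by (intro prod.cong) auto
      then show ?thesis using edge that by (simp add: prod.distrib)
    qed
    then have "hg_adj_apply E (diag_perron d) i
        = d i ^ (m - 1) * hg_adj_apply E (\<lambda>k. complex_of_real (v k)) i"
      unfolding hg_adj_apply_def by (simp add: sum_distrib_left)
    then show ?thesis
      using v_eigen i unfolding hg_adj_apply_of_real diag_perron_def
      by (simp add: power_mult_distrib algebra_simps)
  qed
  moreover have "is_vec n (diag_perron d)" unfolding is_vec_def diag_perron_def by simp
  ultimately show "tensor_eigenpair m n A (of_real r) (diag_perron d)"
    unfolding eigenpair_iff using d0 n1 by (metis less_le_trans zero_less_one zero_neq_one)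
qed

lemma spectral_radius_eq: "spectral_radius m n A = r"
  unfolding spectral_radius_def
proof (rule cSup_eq_maximum)
  show "r \<in> {cmod lam |lam. \<exists>x. tensor_eigenpair m n A lam x}"
    using diag_perron_eigenpair(1)[OF one_in_hg_stabilizers] r_nonneg by force
qed (use eigenvalue_norm_le in auto)

lemma rho_eigvec_eq_diag_perron:
  assumes "y \<in> rho_eigvecs m n A"
  defines "d \<equiv> \<lambda>k. if k < n then sgn (y k) else 1"
  shows "d \<in> hg_stabilizers m n E" and "y = diag_perron d"
proof -
  have y: "tensor_eigenpair m n A (of_real r) y" "y 0 = 1"
    using assms(1) unfolding rho_eigvecs_def spectral_radius_eq by auto
  have modulus: "\<forall>j<n. cmod (y j) = v j" using rho_eigvec_modulus[OF y] by blast
  have y_nz: "y k \<noteq> 0" if "k < n" for k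
  proof
    assume "y k = 0"
    then have "v k = 0" using modulus[rule_format, OF that] by simp
    with v_pos[rule_format, OF that] show False by simp
  qed
  have eigen: "\<forall>i<n. hg_adj_apply E y i = of_real r * y i ^ (m - 1)"
    using y(1) unfolding eigenpair_iff by blast
  have "prod d (e - {i}) = d i ^ (m - 1)" if "e \<in> E" "i \<in> e" for e i
  proof -
    have "prod d (e - {i}) = prod (\<lambda>k. sgn (y k)) (e - {i})"
      using edge_subset[OF that(1)] unfolding d_def by (intro prod.cong) auto
    then show ?thesis
      using rho_eigvec_phase[OF eigen modulus that] edge_subset[OF that(1)] that(2)
      unfolding d_def by auto
  qed
  then show "d \<in> hg_stabilizers m n E"
    using y(2) y_nz unfolding hg_stabilizers_def d_def by (simp add: sgn_eq_0_iff)
  show "y = diag_perron d"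
    using y(1) modulus unfolding tensor_eigenpair_def is_vec_def diag_perron_def d_def
    by (auto simp: fun_eq_iff sgn_eq)
qed

lemma rho_eigvecs_eq: "rho_eigvecs m n A = diag_perron ` hg_stabilizers m n E"
proof
  show "rho_eigvecs m n A \<subseteq> diag_perron ` hg_stabilizers m n E"
    using rho_eigvec_eq_diag_perron by blast
  show "diag_perron ` hg_stabilizers m n E \<subseteq> rho_eigvecs m n A"
    unfolding rho_eigvecs_def spectral_radius_eq using diag_perron_eigenpair by blast
qed

lemma positive_eigvec_eq: "positive_eigvec m n A = diag_perron (\<lambda>_. 1)"
  unfolding positive_eigvec_def
proof (rule the_equality)
  show "diag_perron (\<lambda>_. 1) \<in> rho_eigvecs m n A \<and>
      (\<forall>i<n. Im (diag_perron (\<lambda>_. 1) i) = 0 \<and> 0 < Re (diag_perron (\<lambda>_. 1) i))"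
    using rho_eigvecs_eq one_in_hg_stabilizers v_pos by (auto simp: diag_perron_def)
next
  fix w assume w: "w \<in> rho_eigvecs m n A \<and> (\<forall>i<n. Im (w i) = 0 \<and> 0 < Re (w i))"
  have sgn_w: "sgn (w k) = 1" if "k < n" for k
  proof -
    have "w k = of_real (Re (w k))" using w that by (simp add: complex_eq_iff)
    then show ?thesis using w that by (metis sgn_of_real sgn_pos of_real_1)
  qed
  have w_eq: "w = diag_perron (\<lambda>k. if k < n then sgn (w k) else 1)"
    using rho_eigvec_eq_diag_perron(2) w by blast
  show "w = diag_perron (\<lambda>_. 1)"
  proof
    fix k show "w k = diag_perron (\<lambda>_. 1) k"
      using fun_cong[OF w_eq, of k] sgn_w[of k] unfolding diag_perron_def by (cases "k < n") auto
  qed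
qed

lemma sgn_diag_perron:
  assumes "d \<in> hg_stabilizers m n E" and "i < n"
  shows "sgn (diag_perron d i) = d i"
proof -
  have "sgn (d i) = d i" using norm_hg_stabilizer[OF U C n1 m2 assms(1)] by (simp add: sgn_eq)
  then show ?thesis using v_pos assms(2) by (simp add: diag_perron_def sgn_mult sgn_of_real)
qed

lemma diag_perron_iso: "diag_perron \<in> iso (hg_stab_group m n E) (eigvec_module m n A)"
proof (rule isoI)
  show "diag_perron \<in> hom (hg_stab_group m n E) (eigvec_module m n A)"
  proof (rule homI)
    fix d assume "d \<in> carrier (hg_stab_group m n E)"
    then show "diag_perron d \<in> carrier (eigvec_module m n A)"
      using rho_eigvecs_eq by (simp add: hg_stab_group_def eigvec_module_def)
  next
    fix d d' assume "d \<in> carrier (hg_stab_group m n E)" "d' \<in> carrier (hg_stab_group m n E)"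
    then have "sgn (diag_perron d i) = d i" "sgn (diag_perron d' i) = d' i" if "i < n" for i
      using sgn_diag_perron that by (simp_all add: hg_stab_group_def)
    then show "diag_perron (d \<otimes>\<^bsub>hg_stab_group m n E\<^esub> d')
        = diag_perron d \<otimes>\<^bsub>eigvec_module m n A\<^esub> diag_perron d'"
      unfolding hg_stab_group_def eigvec_module_def positive_eigvec_eq
      by (auto simp: fun_eq_iff diag_perron_def)
  qed
  have "inj_on diag_perron (hg_stabilizers m n E)"
  proof (rule inj_onI)
    fix d d' assume "d \<in> hg_stabilizers m n E" "d' \<in> hg_stabilizers m n E"
      and eq: "diag_perron d = diag_perron d'"
    show "d = d'"
    proof
      fix i show "d i = d' i"
      proof (cases "i < n")
        case True
        then show ?thesis
          using fun_cong[OF eq, of i] v_pos[rule_format, OF True] unfolding diag_perron_def by simp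
      next
        case False
        then show ?thesis using \<open>d \<in> _\<close> \<open>d' \<in> _\<close> unfolding hg_stabilizers_def by simp
      qed
    qed
  qed
  then show "bij_betw diag_perron (carrier (hg_stab_group m n E)) (carrier (eigvec_module m n A))"
    unfolding bij_betw_def rho_eigvecs_eq hg_stab_group_def eigvec_module_def by simp
qed

lemma comm_group_eigvec_module: "comm_group (eigvec_module m n A)"
proof -
  have "comm_group ((eigvec_module m n A)\<lparr>one := diag_perron (\<lambda>_. 1)\<rparr>)"
    using comm_group.iso_imp_img_comm_group[OF comm_group_hg_stab_group diag_perron_iso]
    by (simp add: hg_stab_group_def)
  then show ?thesis by (simp add: eigvec_module_def positive_eigvec_eq)
qed

lemma card_rho_eigvecs: "card (rho_eigvecs m n A) = card (hg_stabilizers m n E)"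
proof -
  have "bij_betw diag_perron (hg_stabilizers m n E) (rho_eigvecs m n A)"
    using diag_perron_iso unfolding iso_def by (simp add: hg_stab_group_def eigvec_module_def)
  then show ?thesis by (simp add: bij_betw_same_card)
qed

lemma hg_stab_dim_eq: "hg_stab_dim m n E = bigomega (card (hg_stabilizers m n E))"
proof -
  have "finite (carrier (eigvec_module m n A))"
    using finite_hg_stabilizers[OF U C n1 m2] by (simp add: eigvec_module_def rho_eigvecs_eq)
  then show ?thesis
    unfolding hg_stab_dim_def stabilizing_dimension_def
    using comm_group.composition_length_eq_bigomega[OF comm_group_eigvec_module] card_rho_eigvecs
    by (simp add: eigvec_module_def)
qed

end

theorem theorem4p6:
  fixes m n :: nat and EG EH :: "nat set set"
  assumes "m \<ge> 2" and "n \<ge> 1"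
    and "uniform_hypergraph m n EG" and "hg_connected n EG"
    and "EH \<subseteq> EG" and "hg_connected n EH"
  shows "hg_stab_index m n EG dvd hg_stab_index m n EH \<and>
         hg_stab_dim m n EG \<le> hg_stab_dim m n EH"
proof -
  have UH: "uniform_hypergraph m n EH" using assms(3,5) by (rule uniform_hypergraph_mono)
  obtain vG :: "nat \<Rightarrow> real" and rG where "\<forall>i<n. 0 < vG i" "vG 0 = 1" "rG \<ge> 0"
      "\<forall>i<n. hg_adj_apply EG vG i = rG * vG i ^ (m - 1)"
    by (rule hg_perron_vector_exists[OF assms(3,4,1,2)])
  with assms interpret G: hg_perron m n EG vG rG by unfold_locales
  obtain vH :: "nat \<Rightarrow> real" and rH where "\<forall>i<n. 0 < vH i" "vH 0 = 1" "rH \<ge> 0"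
      "\<forall>i<n. hg_adj_apply EH vH i = rH * vH i ^ (m - 1)"
    by (rule hg_perron_vector_exists[OF UH assms(6,1,2)])
  with assms UH interpret H: hg_perron m n EH vH rH by unfold_locales
  have fin: "finite (hg_stabilizers m n EH)" by (rule finite_hg_stabilizers[OF UH assms(6,2,1)])
  then have "card (hg_stabilizers m n EH) \<noteq> 0"
    using one_in_hg_stabilizers[of m n EH] by (auto simp: card_eq_0_iff)
  moreover have dvd: "card (hg_stabilizers m n EG) dvd card (hg_stabilizers m n EH)"
    by (rule card_hg_stabilizers_dvd[OF assms(5)])
  ultimately show ?thesis
    using bigomega_dvd_mono[OF dvd] G.hg_stab_dim_eq H.hg_stab_dim_eq
      hg_stab_index_eq_card[OF assms(3,1)] hg_stab_index_eq_card[OF UH assms(1)] by simp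
qed

end
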